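(* Let $V$ be a finite nonempty set, $c\in\mathbb{R}^{P_V}$, $U,U'\subseteq V$ disjoint, $U''=V\setminus(U\cup U')$, $i\in U$, $j\in U'$, and $\hat x$ a maximally specific partial function on $P_V$. Let $P'_{01}=\{pq\in U\times U'\mid \hat x_{pi}\neq 0\neq \hat x_{jq}\}\setminus\hat x^{-1}(1)$ and $P'_{10}=\big((U''\times U)\cup(U'\times U)\cup(U'\times U'')\big)\setminus\hat x^{-1}(0)$. If $\gamma^{ij|1}(X_V[\hat x])\subseteq X_V[\hat x]$ and $$c_{ij}^+\ \ge\ \sum_{pq\in P'_{01}}c_{pq}^- + \sum_{pq\in P'_{10}}c_{pq}^+,$$ then there is a maximizer $x^*$ of $\varphi_c$ over $X_V[\hat x]$ with $x^*_{ij}=1$.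
   Context: $P_V=\{pq\in V^2\mid p\neq q\}$; $X_V$ is the set of $x\in\{0,1\}^{P_V}$ with $x_{pq}+x_{qr}-x_{pr}\le 1$ for all pairwise distinct $p,q,r\in V$; $\varphi_c(x)=\sum_{pq\in P_V}c_{pq}x_{pq}$. A partial function $\tilde x$ is a map from $\operatorname{dom}(\tilde x)\subseteq P_V$ to $\{0,1\}$, $\tilde x^{-1}(b)$ the pairs mapped to $b$; convention $\tilde x_{aa}=1$ and $x_{aa}=1$ for all $a\in V$, $x\in X_V$. $X_V[\tilde x]=\{x\in X_V\mid x_{pq}=\tilde x_{pq}\ \forall pq\in\operatorname{dom}(\tilde x)\}$. A pair $pq$ is decided if $x_{pq}=x'_{pq}$ for all $x,x'\in X_V[\tilde x]$; $\tilde x$ is maximally specific if $X_V[\tilde x]\ne\emptyset$ and the decided pairs are exactly $\operatorname{dom}(\tilde x)$. For $A,B\subseteq V$ disjoint with $A\cup B=V$, $\sigma_{A\times B}\colon X_V\to X_V$ sets $\sigma_{A\times B}(x)_{pq}=0$ if $pq\in A\times B$ and $=x_{pq}$ otherwise. For $ij\in P_V$, $\sigma_{ij}\colon X_V\to X_V$ sets $\sigma_{ij}(x)_{pq}=1$ if $x_{pi}=x_{jq}=1$ and $=x_{pq}$ otherwise. Let $\gamma=\sigma_{ij}\circ\sigma_{(V\setminus U)\times U}\circ\sigma_{U'\times(V\setminus U')}$ and $\gamma^{ij|1}\colon X_V[\hat x]\to X_V$ with $\gamma^{ij|1}(x)=x$ if $x_{ij}=1$ and $\gamma^{ij|1}(x)=\gamma(x)$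 if $x_{ij}=0$. For real $a$: $a^+=\max(a,0)$, $a^-=\max(-a,0)$. *)

theory Defs
  imports Complex_Main
begin

text \<open>Points of \<open>{0,1}^{P_V}\<close> are represented as functions \<open>'a \<times> 'a \<Rightarrow> int\<close> with
  values in \<open>{0,1}\<close> on \<open>P_V\<close>, the convention \<open>x_aa = 1\<close> for \<open>a \<in> V\<close> built in,
  and value 0 outside \<open>V \<times> V\<close> (canonical extension).\<close>

definition PV :: "'a set \<Rightarrow> ('a \<times> 'a) set" where
  "PV V = {(p, q). p \<in> V \<and> q \<in> V \<and> p \<noteq> q}"

definition XV :: "'a set \<Rightarrow> ('a \<times> 'a \<Rightarrow> int) set" where
  "XV V = {x. (\<forall>pq \<in> PV V. x pq \<in> {0, 1})
            \<and> (\<forall>a \<in> V. x (a, a) = 1)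
            \<and> (\<forall>pq. pq \<notin> V \<times> V \<longrightarrow> x pq = 0)
            \<and> (\<forall>p \<in> V. \<forall>q \<in> V. \<forall>r \<in> V. p \<noteq> q \<and> q \<noteq> r \<and> p \<noteq> r \<longrightarrow>
                  x (p, q) + x (q, r) - x (p, r) \<le> 1)}"

definition phi :: "('a \<times> 'a \<Rightarrow> real) \<Rightarrow> 'a set \<Rightarrow> ('a \<times> 'a \<Rightarrow> int) \<Rightarrow> real" where
  "phi c V x = (\<Sum>pq \<in> PV V. c pq * of_int (x pq))"

definition XVr :: "'a set \<Rightarrow> ('a \<times> 'a \<Rightarrow> int option) \<Rightarrow> ('a \<times> 'a \<Rightarrow> int) set" where
  "XVr V xt = {x \<in> XV V. \<forall>pq \<in> dom xt. Some (x pq) = xt pq}"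

definition decided :: "'a set \<Rightarrow> ('a \<times> 'a \<Rightarrow> int option) \<Rightarrow> ('a \<times> 'a) \<Rightarrow> bool" where
  "decided V xt pq \<longleftrightarrow> (\<forall>x \<in> XVr V xt. \<forall>x' \<in> XVr V xt. x pq = x' pq)"

definition partial_fun_on :: "'a set \<Rightarrow> ('a \<times> 'a \<Rightarrow> int option) \<Rightarrow> bool" where
  "partial_fun_on V xt \<longleftrightarrow> dom xt \<subseteq> PV V \<and> ran xt \<subseteq> {0, 1}"

definition maximally_specific :: "'a set \<Rightarrow> ('a \<times> 'a \<Rightarrow> int option) \<Rightarrow> bool" where
  "maximally_specific V xt \<longleftrightarrow>
     XVr V xt \<noteq> {} \<and> {pq \<in> PV V. decided V xt pq} = dom xt"

definition sigma_cut :: "'a set \<Rightarrow> 'a set \<Rightarrow> ('a \<times> 'a \<Rightarrow> int) \<Rightarrow> ('a \<times> 'a \<Rightarrow> int)" where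
  "sigma_cut A B x = (\<lambda>pq. if pq \<in> A \<times> B then 0 else x pq)"

definition sigma_join :: "'a set \<Rightarrow> 'a \<Rightarrow> 'a \<Rightarrow> ('a \<times> 'a \<Rightarrow> int) \<Rightarrow> ('a \<times> 'a \<Rightarrow> int)" where
  "sigma_join V i j x = (\<lambda>(p, q). if (p, q) \<in> PV V \<and> x (p, i) = 1 \<and> x (j, q) = 1 then 1 else x (p, q))"

definition gamma :: "'a set \<Rightarrow> 'a set \<Rightarrow> 'a set \<Rightarrow> 'a \<Rightarrow> 'a \<Rightarrow> ('a \<times> 'a \<Rightarrow> int) \<Rightarrow> ('a \<times> 'a \<Rightarrow> int)" where
  "gamma V U U' i j = sigma_join V i j \<circ> sigma_cut (V - U) U \<circ> sigma_cut U' (V - U')"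

definition gamma1 :: "'a set \<Rightarrow> 'a set \<Rightarrow> 'a set \<Rightarrow> 'a \<Rightarrow> 'a \<Rightarrow> ('a \<times> 'a \<Rightarrow> int) \<Rightarrow> ('a \<times> 'a \<Rightarrow> int)" where
  "gamma1 V U U' i j x = (if x (i, j) = 1 then x else gamma V U U' i j x)"

definition pos_part :: "real \<Rightarrow> real" where "pos_part a = max a 0"
definition neg_part :: "real \<Rightarrow> real" where "neg_part a = max (- a) 0"

end

theory Submission
  imports Defs
begin

text \<open>Take a maximizer \<open>x\<close> of \<open>\<phi>\<^sub>c\<close> over \<open>X\<^sub>V[xh]\<close>; if \<open>x\<^sub>i\<^sub>j = 0\<close>, replace it by \<open>\<gamma>(x)\<close>,
  which is feasible by assumption and has \<open>\<gamma>(x)\<^sub>i\<^sub>j = 1\<close>. The cuts of \<open>\<gamma>\<close> only lower pairs of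
  \<open>P'\<^sub>1\<^sub>0\<close>, and the join \<open>\<sigma>\<^sub>i\<^sub>j\<close> only raises pairs \<open>pq \<in> U \<times> U'\<close> with \<open>x\<^sub>p\<^sub>i = x\<^sub>j\<^sub>q = 1\<close>,
  i.e. pairs of \<open>P'\<^sub>0\<^sub>1\<close>, among them \<open>ij\<close> itself. Hence \<open>\<phi>\<^sub>c(\<gamma>(x)) - \<phi>\<^sub>c(x)\<close> is at least
  \<open>c\<^sub>i\<^sub>j\<^sup>+\<close> minus the right-hand side of the hypothesis, so \<open>\<gamma>(x)\<close> is again a maximizer.\<close>

lemma finite_PV: "finite V \<Longrightarrow> finite (PV V)"
  by (rule finite_subset[of _ "V \<times> V"]) (auto simp: PV_def)

lemma finite_XV:
  assumes "finite V"
  shows "finite (XV V)"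
proof (rule finite_subset)
  show "XV V \<subseteq> {f. \<forall>pq. (pq \<in> V \<times> V \<longrightarrow> f pq \<in> {0, 1}) \<and> (pq \<notin> V \<times> V \<longrightarrow> f pq = 0)}"
    unfolding XV_def PV_def by auto
  show "finite {f :: 'a \<times> 'a \<Rightarrow> int.
          \<forall>pq. (pq \<in> V \<times> V \<longrightarrow> f pq \<in> {0, 1}) \<and> (pq \<notin> V \<times> V \<longrightarrow> f pq = 0)}"
    by (rule finite_set_of_finite_funs) (use assms in auto)
qed

lemma XVr_subset: "XVr V xh \<subseteq> XV V"
  unfolding XVr_def by blast

lemma XV_D:
  assumes "x \<in> XV V"
  shows "\<forall>pq \<in> PV V. x pq \<in> {0, 1}" "\<forall>a \<in> V. x (a, a) = 1" "\<forall>pq. pq \<notin> V \<times> V \<longrightarrow> x pq = 0"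
  using assms unfolding XV_def by blast+

lemma XV_01:
  assumes "x \<in> XV V"
  shows "x (p, q) = 0 \<or> x (p, q) = 1"
proof -
  consider "p = q" "p \<in> V" | "(p, q) \<in> PV V" | "(p, q) \<notin> V \<times> V" unfolding PV_def by auto
  then show ?thesis using XV_D[OF assms] by cases blast+
qed

lemma XVr_agrees:
  assumes "x \<in> XVr V xh" "xh pq = Some b"
  shows "x pq = b"
proof -
  have "pq \<in> dom xh" using assms(2) by blast
  then have "Some (x pq) = xh pq" using assms(1) unfolding XVr_def by blast
  with assms(2) show ?thesis by simp
qed

lemma sum_0_1_le_by_exchange:
  fixes c :: "'s \<Rightarrow> real" and x y :: "'s \<Rightarrow> int"
  assumes "finite S" "a \<in> S" "A \<subseteq> S" "B \<subseteq> S" "a \<notin> B"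
    and x01: "\<forall>s \<in> S. x s \<in> {0, 1}" and y01: "\<forall>s \<in> S. y s \<in> {0, 1}"
    and "x a = 0" "y a = 1"
    and raised: "\<forall>s \<in> S. x s < y s \<longrightarrow> s \<in> A"
    and lowered: "\<forall>s \<in> S. y s < x s \<longrightarrow> s \<in> B"
    and dominates: "pos_part (c a) \<ge> (\<Sum>s \<in> A. neg_part (c s)) + (\<Sum>s \<in> B. pos_part (c s))"
  shows "(\<Sum>s \<in> S. c s * of_int (x s)) \<le> (\<Sum>s \<in> S. c s * of_int (y s))"
proof -
  have "a \<in> A" using raised assms(2,8,9) by auto
  define g where "g s = (if s = a then c a else 0)
      - (if s \<in> A - {a} then neg_part (c s) else 0) - (if s \<in> B then pos_part (c s) else 0)" for s
  have g_le: "g s \<le> c s * (of_int (y s) - of_int (x s))" if "s \<in> S" for s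
    using that x01 y01 raised lowered \<open>x a = 0\<close> \<open>y a = 1\<close> \<open>a \<notin> B\<close>
    unfolding g_def pos_part_def neg_part_def by fastforce
  have "S \<inter> {s \<in> A. s \<noteq> a} = A - {a}" using \<open>A \<subseteq> S\<close> by blast
  then have "(\<Sum>s \<in> S. g s) = c a - (\<Sum>s \<in> A - {a}. neg_part (c s)) - (\<Sum>s \<in> B. pos_part (c s))"
    using assms(1-4) by (simp add: g_def sum_subtractf sum.If_cases Int_absorb1)
  also have "\<dots> = pos_part (c a) - (\<Sum>s \<in> A. neg_part (c s)) - (\<Sum>s \<in> B. pos_part (c s))"
    using \<open>a \<in> A\<close> finite_subset[OF \<open>A \<subseteq> S\<close> \<open>finite S\<close>]
    by (simp add: sum.remove pos_part_def neg_part_def)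
  finally have "0 \<le> (\<Sum>s \<in> S. g s)" using dominates by linarith
  also have "\<dots> \<le> (\<Sum>s \<in> S. c s * (of_int (y s) - of_int (x s)))"
    using g_le by (rule sum_mono)
  finally show ?thesis by (simp add: sum_subtractf right_diff_distrib)
qed

lemma gamma_apply:
  "gamma V U U' i j x (p, q) =
     (let y = sigma_cut (V - U) U (sigma_cut U' (V - U') x)
      in if (p, q) \<in> PV V \<and> y (p, i) = 1 \<and> y (j, q) = 1 then 1 else y (p, q))"
  by (simp add: gamma_def sigma_join_def Let_def)

lemma gamma_01:
  assumes "x \<in> XV V"
  shows "gamma V U U' i j x pq \<in> {0, 1}"
  using XV_01[OF assms] by (cases pq) (simp add: gamma_apply sigma_cut_def Let_def)

lemma gamma_ij:
  assumes "x \<in> XV V" "U \<subseteq> V" "U' \<subseteq> V" "U \<inter> U' = {}" "i \<in> U" "j \<in> U'"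
  shows "gamma V U U' i j x (i, j) = 1"
proof -
  have "x (i, i) = 1" "x (j, j) = 1" using XV_D(2)[OF assms(1)] assms(2-6) by auto
  then show ?thesis using assms(2-6) unfolding gamma_apply sigma_cut_def PV_def Let_def by auto
qed

lemma gamma_raised_pair:
  assumes "x \<in> XV V" "i \<in> U" "j \<in> U'" "x (p, q) < gamma V U U' i j x (p, q)"
  shows "p \<in> U \<and> q \<in> U' \<and> x (p, i) = 1 \<and> x (j, q) = 1"
proof -
  define y where "y = sigma_cut (V - U) U (sigma_cut U' (V - U') x)"
  have y_cases: "y pq = 0 \<or> y pq = x pq" for pq
    unfolding y_def sigma_cut_def by auto
  have "y (p, i) = 1 \<and> y (j, q) = 1"
    using assms(4) y_cases[of "(p, q)"] XV_01[OF assms(1), of p q]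
    unfolding gamma_apply y_def[symmetric] Let_def by (auto split: if_splits)
  then have "x (p, i) = 1 \<and> x (j, q) = 1 \<and> (p, i) \<notin> (V - U) \<times> U \<and> (j, q) \<notin> U' \<times> (V - U')"
    unfolding y_def sigma_cut_def by (auto split: if_splits)
  moreover have "x pq = 1 \<Longrightarrow> pq \<in> V \<times> V" for pq
    using XV_D(3)[OF assms(1)] by (metis zero_neq_one)
  ultimately show ?thesis using assms(2,3) by auto
qed

lemma gamma_lowered_pair:
  assumes "x \<in> XV V" "gamma V U U' i j x (p, q) < x (p, q)"
  shows "(p, q) \<in> (V - U) \<times> U \<union> U' \<times> (V - U')"
proof -
  define y where "y = sigma_cut (V - U) U (sigma_cut U' (V - U') x)"
  have "y (p, q) \<le> 1"
    using XV_01[OF assms(1), of p q] unfolding y_def sigma_cut_def by auto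
  then have "y (p, q) \<le> gamma V U U' i j x (p, q)"
    unfolding gamma_apply y_def[symmetric] Let_def by simp
  then have "y (p, q) \<noteq> x (p, q)" using assms(2) by simp
  then show ?thesis unfolding y_def sigma_cut_def by (auto split: if_splits)
qed

lemma gamma_raises_only_P01:
  assumes x: "x \<in> XVr V xh" and "i \<in> U" "j \<in> U'" and raised: "x pq < gamma V U U' i j x pq"
  shows "pq \<in> {(p, q) \<in> U \<times> U'. xh (p, i) \<noteq> Some 0 \<and> xh (j, q) \<noteq> Some 0} - {pq. xh pq = Some 1}"
proof -
  obtain p q where pq: "pq = (p, q)" by fastforce
  have "x \<in> XV V" using x XVr_subset by blast
  have raised_pq: "x (p, q) < gamma V U U' i j x (p, q)" using raised pq by simp
  then have "x (p, q) = 0"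
    using XV_01[OF \<open>x \<in> XV V\<close>, of p q] gamma_01[OF \<open>x \<in> XV V\<close>, of U U' i j "(p, q)"] by auto
  moreover have "p \<in> U \<and> q \<in> U' \<and> x (p, i) = 1 \<and> x (j, q) = 1"
    by (rule gamma_raised_pair[OF \<open>x \<in> XV V\<close> \<open>i \<in> U\<close> \<open>j \<in> U'\<close> raised_pq])
  ultimately have "xh (p, i) \<noteq> Some 0" "xh (j, q) \<noteq> Some 0" "xh (p, q) \<noteq> Some 1" "p \<in> U" "q \<in> U'"
    using XVr_agrees[OF x] by force+
  then show ?thesis unfolding pq by simp
qed

lemma gamma_lowers_only_P10:
  assumes x: "x \<in> XVr V xh" and "U \<inter> U' = {}" "pq \<in> PV V"
    and lowered: "gamma V U U' i j x pq < x pq"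
  shows "pq \<in> (((V - (U \<union> U')) \<times> U) \<union> (U' \<times> U) \<union> (U' \<times> (V - (U \<union> U'))))
                    - {pq. xh pq = Some 0}"
proof -
  obtain p q where pq: "pq = (p, q)" by fastforce
  have "x \<in> XV V" using x XVr_subset by blast
  have lowered_pq: "gamma V U U' i j x (p, q) < x (p, q)" and "p \<in> V" "q \<in> V"
    using lowered \<open>pq \<in> PV V\<close> unfolding pq PV_def by auto
  then have "x (p, q) = 1"
    using XV_01[OF \<open>x \<in> XV V\<close>, of p q] gamma_01[OF \<open>x \<in> XV V\<close>, of U U' i j "(p, q)"] by auto
  then have "xh (p, q) \<noteq> Some 0" using XVr_agrees[OF x] by force
  moreover have "(p, q) \<in> (V - U) \<times> U \<union> U' \<times> (V - U')"
    by (rule gamma_lowered_pair[OF \<open>x \<in> XV V\<close> lowered_pq])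
  ultimately show ?thesis unfolding pq using \<open>p \<in> V\<close> \<open>q \<in> V\<close> \<open>U \<inter> U' = {}\<close> by blast
qed

lemma phi_le_phi_gamma:
  fixes c :: "'a \<times> 'a \<Rightarrow> real"
  assumes "finite V" "U \<subseteq> V" "U' \<subseteq> V" "U \<inter> U' = {}" "i \<in> U" "j \<in> U'"
    and x: "x \<in> XVr V xh" "x (i, j) = 0"
    and dominates: "pos_part (c (i, j)) \<ge>
           (\<Sum>pq \<in> {(p, q) \<in> U \<times> U'. xh (p, i) \<noteq> Some 0 \<and> xh (j, q) \<noteq> Some 0}
                    - {pq. xh pq = Some 1}. neg_part (c pq))
         + (\<Sum>pq \<in> (((V - (U \<union> U')) \<times> U) \<union> (U' \<times> U) \<union> (U' \<times> (V - (U \<union> U'))))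
                    - {pq. xh pq = Some 0}. pos_part (c pq))"
  shows "phi c V x \<le> phi c V (gamma V U U' i j x)"
proof -
  define A where "A = {(p, q) \<in> U \<times> U'. xh (p, i) \<noteq> Some 0 \<and> xh (j, q) \<noteq> Some 0}
                    - {pq. xh pq = Some 1}"
  define B where "B = (((V - (U \<union> U')) \<times> U) \<union> (U' \<times> U) \<union> (U' \<times> (V - (U \<union> U'))))
                    - {pq. xh pq = Some 0}"
  let ?x' = "gamma V U U' i j x"
  have "x \<in> XV V" using x(1) XVr_subset by blast
  have "(\<Sum>pq \<in> PV V. c pq * of_int (x pq)) \<le> (\<Sum>pq \<in> PV V. c pq * of_int (?x' pq))"
  proof (rule sum_0_1_le_by_exchange[where a = "(i, j)" and A = A and B = B])
    show "finite (PV V)" using \<open>finite V\<close> by (rule finite_PV)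
    show "x (i, j) = 0" by (fact x(2))
    show "(i, j) \<in> PV V" "A \<subseteq> PV V" "B \<subseteq> PV V" "(i, j) \<notin> B"
      using assms(2-6) unfolding A_def B_def PV_def by auto
    show "\<forall>pq \<in> PV V. x pq \<in> {0, 1}" "\<forall>pq \<in> PV V. ?x' pq \<in> {0, 1}"
      using XV_01[OF \<open>x \<in> XV V\<close>] gamma_01[OF \<open>x \<in> XV V\<close>] by auto
    show "?x' (i, j) = 1" by (rule gamma_ij) (use assms(2-6) \<open>x \<in> XV V\<close> in auto)
    show "\<forall>pq \<in> PV V. x pq < ?x' pq \<longrightarrow> pq \<in> A"
      unfolding A_def using gamma_raises_only_P01[OF x(1) \<open>i \<in> U\<close> \<open>j \<in> U'\<close>] by blast
    show "\<forall>pq \<in> PV V. ?x' pq < x pq \<longrightarrow> pq \<in> B"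
      unfolding B_def using gamma_lowers_only_P10[OF x(1) \<open>U \<inter> U' = {}\<close>] by blast
    show "(\<Sum>pq \<in> A. neg_part (c pq)) + (\<Sum>pq \<in> B. pos_part (c pq)) \<le> pos_part (c (i, j))"
      using dominates unfolding A_def B_def .
  qed
  then show ?thesis unfolding phi_def .
qed

theorem proposition6p6:
  fixes V U U' :: "'a set" and c :: "'a \<times> 'a \<Rightarrow> real"
    and i j :: 'a and xh :: "'a \<times> 'a \<Rightarrow> int option"
  assumes "finite V" and "V \<noteq> {}"
    and "U \<subseteq> V" and "U' \<subseteq> V" and "U \<inter> U' = {}"
    and "i \<in> U" and "j \<in> U'"
    and "partial_fun_on V xh" and "maximally_specific V xh"
    and "gamma1 V U U' i j ` XVr V xh \<subseteq> XVr V xh"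
    and "pos_part (c (i, j)) \<ge>
           (\<Sum>pq \<in> {(p, q) \<in> U \<times> U'. xh (p, i) \<noteq> Some 0 \<and> xh (j, q) \<noteq> Some 0}
                    - {pq. xh pq = Some 1}. neg_part (c pq))
         + (\<Sum>pq \<in> (((V - (U \<union> U')) \<times> U) \<union> (U' \<times> U) \<union> (U' \<times> (V - (U \<union> U'))))
                    - {pq. xh pq = Some 0}. pos_part (c pq))"
  shows "\<exists>xs \<in> XVr V xh. (\<forall>x \<in> XVr V xh. phi c V x \<le> phi c V xs) \<and> xs (i, j) = 1"
proof -
  let ?S = "XVr V xh"
  have "finite ?S" by (rule finite_subset[OF XVr_subset finite_XV[OF assms(1)]])
  moreover have "?S \<noteq> {}" \<comment> \<open>the only use of maximal specificity\<close>
    using assms(9) unfolding maximally_specific_def by (rule conjunct1)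
  ultimately have "Max (phi c V ` ?S) \<in> phi c V ` ?S" by simp
  then obtain x where x: "x \<in> ?S" and x_Max: "phi c V x = Max (phi c V ` ?S)"
    by (metis imageE)
  have x_max: "\<forall>y \<in> ?S. phi c V y \<le> phi c V x"
    unfolding x_Max using \<open>finite ?S\<close> by simp
  have "x \<in> XV V" using x XVr_subset by blast
  show ?thesis
  proof (cases "x (i, j) = 1")
    case True
    with x x_max show ?thesis by blast
  next
    case False
    then have "x (i, j) = 0" using XV_01[OF \<open>x \<in> XV V\<close>] by blast
    let ?x' = "gamma V U U' i j x"
    have "gamma1 V U U' i j x = ?x'" unfolding gamma1_def using False by simp
    then have "?x' \<in> ?S" using subsetD[OF assms(10) imageI[OF x]] by simp
    moreover have "phi c V x \<le> phi c V ?x'"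
      by (rule phi_le_phi_gamma[OF assms(1,3-7) x \<open>x (i, j) = 0\<close> assms(11)])
    moreover have "?x' (i, j) = 1" by (rule gamma_ij[OF \<open>x \<in> XV V\<close> assms(3-7)])
    ultimately show ?thesis using x_max by (meson order_trans)
  qed
qed

end
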